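(* Fix $C\ge0$. As $n\to\infty$, uniformly for integers $0\le\kappa,N\le n+C$ with $N\le\tfrac43\kappa+C$, \[ \sum_{g\in\mathcal M^\times(\kappa)}q^{\Delta_A(g;N)/2}\ll_{A} q^{\kappa+3N/8+o(n)}. \]
   Context: $q$ is a fixed odd prime power; fix $m\ge0$, $c_0,\dots,c_m\in\mathbb F_q$ with $c_m\ne0$, $A(z)=c_0+\tfrac12\sum_{\ell=1}^m c_\ell(z^\ell+z^{-\ell})$. $B_A(f,h)=\operatorname{CT}\,A(z)f(z)h(z^{-1})$ (constant term of the Laurent polynomial). $V_N$ is the space of polynomials of degree $\le N$; for $0\ne g$, $B_{g,N}(h,w)=B_A(gh,gw)$ on $V_N$ and $\Delta_A(g;N)=\dim\operatorname{rad}(B_{g,N})=N+1-\operatorname{rank}B_{g,N}$. $\mathcal M^\times(\kappa)$ is the set of monic polynomials $g$ of degree $\kappa$ with $g(0)\neq0$. Implied constants depend only on $q$, $C$ and $c_0,\dots,c_m$; $q^{o(n)}$ is a factor $q^{\varepsilon(n)n}$ with $\varepsilon(n)\to0$. *)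

theory Defs
  imports Complex_Main "HOL-Computational_Algebra.Polynomial" "HOL-Library.Cardinality"
begin

text \<open>Constant term of z^k f(z) h(z^-1), for k an integer.\<close>
definition ct_shift :: "int \<Rightarrow> 'a::comm_ring_1 poly \<Rightarrow> 'a poly \<Rightarrow> 'a" where
  "ct_shift k f h = (\<Sum>i\<le>degree f. \<Sum>j\<le>degree h.
      if int i - int j + k = 0 then coeff f i * coeff h j else 0)"

text \<open>B_A(f,h) = CT A(z) f(z) h(z^-1), with
  A(z) = c_0 + 1/2 sum_{l=1..m} c_l (z^l + z^-l).\<close>
definition B_A :: "(nat \<Rightarrow> 'a::field) \<Rightarrow> nat \<Rightarrow> 'a poly \<Rightarrow> 'a poly \<Rightarrow> 'a" where
  "B_A c m f h = c 0 * ct_shift 0 f h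
     + inverse 2 * (\<Sum>l\<in>{1..m}. c l * (ct_shift (int l) f h + ct_shift (- int l) f h))"

definition V :: "nat \<Rightarrow> 'a::zero poly set" where
  "V N = {h. degree h \<le> N}"

definition rad_B :: "(nat \<Rightarrow> 'a::field) \<Rightarrow> nat \<Rightarrow> 'a poly \<Rightarrow> nat \<Rightarrow> 'a poly set" where
  "rad_B c m g N = {h \<in> V N. \<forall>w \<in> V N. B_A c m (g * h) (g * w) = 0}"

definition Delta_A :: "(nat \<Rightarrow> 'a::field) \<Rightarrow> nat \<Rightarrow> 'a poly \<Rightarrow> nat \<Rightarrow> nat" where
  "Delta_A c m g N = vector_space.dim (smult :: 'a \<Rightarrow> 'a poly \<Rightarrow> 'a poly) (rad_B c m g N)"

definition Mx :: "nat \<Rightarrow> 'a::field poly set" where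
  "Mx \<kappa> = {g. lead_coeff g = 1 \<and> degree g = \<kappa> \<and> coeff g 0 \<noteq> 0}"

end

theory Submission
  imports
    Defs
    "HOL-Computational_Algebra.Polynomial_Factorial"
    "HOL-Library.FuncSet"
    "HOL-Real_Asymp.Real_Asymp"
begin

text \<open>
  Write \<open>Q\<^sub>g = z\<^bsup>m + deg g\<^esup> A(z) g(z) g(1/z)\<close>. The Gram matrix of \<open>B\<^sub>g\<^sub>,\<^sub>N\<close> in the
  monomial basis is the Toeplitz matrix of the coefficients of \<open>Q\<^sub>g\<close>, so the radical consists of
  the \<open>h\<close> of degree at most \<open>N\<close> for which \<open>Q\<^sub>g h\<close> has \<open>N + 1\<close> consecutive vanishing middle
  coefficients; it is stable under the reversal \<open>h \<mapsto> z\<^sup>N h(1/z)\<close>.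

  If \<open>\<Delta>\<^sub>A(g;N) \<ge> \<delta>\<close> and \<open>a = \<lfloor>(\<delta> - 1)/2\<rfloor>\<close>, a dimension count inside \<open>V\<^sub>N\<close> gives a nonzero
  symmetric or antisymmetric \<open>u\<close> of degree at most \<open>N - 2a\<close> with \<open>z\<^sup>a u\<close> in the radical. Then
  \<open>Q\<^sub>g u\<close> is symmetric or antisymmetric with a long gap, hence determined by the sign, \<open>u\<close> and
  its \<open>\<kappa> + m - a\<close> lowest coefficients, and \<open>g\<close> is a monic divisor of \<open>Q\<^sub>g\<close>. So the number
  of \<open>g\<close> with \<open>\<Delta>\<^sub>A(g;N) \<ge> \<delta>\<close> is at most \<open>q\<^bsup>N + \<kappa> + m - 3a + O(1)\<^esup>\<close> times the number of
  monic divisors of a polynomial of degree \<open>2(\<kappa> + m)\<close>, which is \<open>q\<^bsup>o(n)\<^esup>\<close>: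
  there are at most \<open>q\<^sup>t\<close> irreducible factors of degree below \<open>t\<close> and at most \<open>2(\<kappa> + m)/t\<close> of
  degree at least \<open>t\<close>, and \<open>t\<close> is optimised for each \<open>n\<close>. Using the trivial count \<open>q\<^sup>\<kappa>\<close> when
  \<open>\<delta> \<le> 3N/4\<close>, every value of \<open>\<Delta>\<^sub>A\<close> contributes at most \<open>q\<^bsup>\<kappa> + 3N/8 + o(n)\<^esup>\<close>.
\<close>

section \<open>Polynomials over a finite field\<close>

lemma bij_betw_coeff_list_degree_le:
  "bij_betw (\<lambda>p. map (coeff p) [0..<Suc n]) {p. degree p \<le> n} {xs. length xs = Suc n}"
proof (rule bij_betw_byWitness[where f' = Poly])
  show "\<forall>p\<in>{p. degree p \<le> n}. Poly (map (coeff p) [0..<Suc n]) = p"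
    by (auto intro!: poly_eqI simp: nth_default_def coeff_eq_0 simp del: upt_Suc)
  show "\<forall>xs\<in>{xs. length xs = Suc n}. map (coeff (Poly xs)) [0..<Suc n] = xs"
    by (auto intro!: nth_equalityI simp: nth_default_nth simp del: upt_Suc)
  show "Poly ` {xs. length xs = Suc n} \<subseteq> {p. degree p \<le> n}"
    by (auto intro!: degree_le simp: nth_default_def)
qed auto

lemma finite_degree_le: "finite {p :: 'a::{finite,zero} poly. degree p \<le> n}"
  using bij_betw_finite[OF bij_betw_coeff_list_degree_le[where 'a = 'a]]
    finite_lists_length_eq[of "UNIV :: 'a set"] by simp

lemma card_degree_le: "card {p :: 'a::{finite,zero} poly. degree p \<le> n} = CARD('a) ^ Suc n"
  using bij_betw_same_card[OF bij_betw_coeff_list_degree_le[where 'a = 'a]]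
    card_lists_length_eq[of "UNIV :: 'a set"] by simp

lemma finite_Mx: "finite (Mx \<kappa> :: 'a::{field,finite} poly set)"
  by (rule finite_subset[OF _ finite_degree_le[of \<kappa>]]) (auto simp: Mx_def)

lemma card_Mx_le: "card (Mx \<kappa> :: 'a::{field,finite} poly set) \<le> CARD('a) ^ \<kappa>"
proof -
  have "inj_on (\<lambda>g. map (coeff g) [0..<\<kappa>]) (Mx \<kappa> :: 'a poly set)"
  proof (rule inj_onI, rule poly_eqI)
    fix p q :: "'a poly" and i
    assume "p \<in> Mx \<kappa>" "q \<in> Mx \<kappa>" and eq: "map (coeff p) [0..<\<kappa>] = map (coeff q) [0..<\<kappa>]"
    then show "coeff p i = coeff q i"
      using nth_map_upt[of i \<kappa> 0 "coeff p"] nth_map_upt[of i \<kappa> 0 "coeff q"]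
      by (cases i \<kappa> rule: linorder_cases) (auto simp: Mx_def coeff_eq_0)
  qed
  then have "card (Mx \<kappa> :: 'a poly set) \<le> card {xs :: 'a list. length xs = \<kappa>}"
    using finite_lists_length_eq[of "UNIV :: 'a set"] by (intro card_inj_on_le) auto
  then show ?thesis
    using card_lists_length_eq[of "UNIV :: 'a set"] by simp
qed

lemma one_less_card_field: "1 < CARD('a::{field,finite})"
  using card_mono[of "UNIV :: 'a set" "{0, 1}"] by simp

text \<open>Translation by \<open>1\<close> permutes a finite ring, so adding \<open>1\<close> to every element does not
  change their sum.\<close>

lemma of_nat_card_UNIV_eq_0: "of_nat CARD('a::{ring_1,finite}) = (0 :: 'a)"
proof -
  have "(\<Sum>y\<in>UNIV. y + 1) = (\<Sum>y\<in>UNIV. y :: 'a)"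
    by (rule sum.reindex_bij_betw) (rule bij_betw_byWitness[where f' = "\<lambda>y. y - 1"], auto)
  then show ?thesis
    by (simp add: sum.distrib)
qed

lemma two_neq_zero_if_odd_card:
  assumes "odd CARD('a::{field,finite})"
  shows "(2::'a) \<noteq> 0"
proof
  assume "(2::'a) = 0"
  then have "CHAR('a) dvd 2"
    using of_nat_eq_0_iff_char_dvd[of 2, where 'a = 'a] by simp
  then have "CHAR('a) = 2"
    using CHAR_not_1[where 'a = 'a] dvd_imp_le[of "CHAR('a)" 2] by (cases "CHAR('a)") auto
  then show False
    using of_nat_eq_0_iff_char_dvd[of "CARD('a)", where 'a = 'a] of_nat_card_UNIV_eq_0[where 'a = 'a] assms
    by simp
qed

section \<open>Counting monic divisors\<close>

lemma monic_unit_eq_1: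
  fixes p :: "'a::field poly"
  assumes "is_unit p" "lead_coeff p = 1"
  shows "p = 1"
proof -
  have "p \<noteq> 0"
    using assms(2) by auto
  then have "degree p = 0"
    using assms(1) is_unit_iff_degree[of p] by auto
  then show ?thesis
    using assms(2) by (metis degree_0_id one_pCons)
qed

lemma monic_irreducible_factorization:
  fixes p :: "'a::field poly"
  assumes "lead_coeff p = 1"
  obtains F where "prod_mset F = p" "\<forall>f\<in>#F. lead_coeff f = 1 \<and> irreducible f"
  using assms
proof (induction "degree p" arbitrary: p thesis rule: less_induct)
  case less
  consider "is_unit p" | "irreducible p" | a b where "p = a * b" "\<not> is_unit a" "\<not> is_unit b"
    using less.prems(2) irreducible_def[of p] by force
  then show ?case
  proof cases
    case 1
    then show ?thesis
      using less.prems monic_unit_eq_1[of p] by (intro less.prems(1)[of "{#}"]) auto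
  next
    case 2
    then show ?thesis
      using less.prems by (intro less.prems(1)[of "{#p#}"]) auto
  next
    case 3
    have nz: "a \<noteq> 0" "b \<noteq> 0"
      using 3 less.prems(2) by auto
    have deg: "degree a < degree p" "degree b < degree p"
      using 3 nz is_unit_iff_degree[of a] is_unit_iff_degree[of b] by (auto simp: degree_mult_eq)
    define a' where "a' = smult (inverse (lead_coeff a)) a"
    define b' where "b' = smult (inverse (lead_coeff b)) b"
    have lc: "lead_coeff a' = 1" "lead_coeff b' = 1"
      using nz by (simp_all add: a'_def b'_def)
    have "lead_coeff a * lead_coeff b = 1"
      using 3 less.prems(2) by (simp add: lead_coeff_mult)
    then have "inverse (lead_coeff b) * inverse (lead_coeff a) = 1"
      by (metis inverse_1 inverse_mult_distrib mult.commute)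
    then have "a' * b' = p"
      using 3 by (simp add: a'_def b'_def)
    obtain A where A: "prod_mset A = a'" "\<forall>f\<in>#A. lead_coeff f = 1 \<and> irreducible f"
      using less.hyps[OF _ _ lc(1)] deg nz by (auto simp: a'_def)
    obtain B where B: "prod_mset B = b'" "\<forall>f\<in>#B. lead_coeff f = 1 \<and> irreducible f"
      using less.hyps[OF _ _ lc(2)] deg nz by (auto simp: b'_def)
    show ?thesis
      using A B \<open>a' * b' = p\<close> by (intro less.prems(1)[of "A + B"]) auto
  qed
qed

lemma monic_dvd_prod_mset_irreducible:
  fixes g :: "'a::field poly"
  assumes "\<forall>f\<in>#F. lead_coeff f = 1 \<and> irreducible f" "lead_coeff g = 1" "g dvd prod_mset F"
  shows "\<exists>G. G \<subseteq># F \<and> g = prod_mset G"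
  using assms
proof (induction F arbitrary: g)
  case empty
  then show ?case
    using monic_unit_eq_1[of g] by auto
next
  case (add f F)
  have f: "lead_coeff f = 1" "prime_elem f"
    using add.prems(1) field_poly_irreducible_imp_prime[of f] by auto
  obtain k where k: "f * prod_mset F = g * k"
    using add.prems(3) by (elim dvdE) auto
  then have "f dvd g * k"
    by (metis dvd_triv_left)
  then consider "f dvd g" | "f dvd k"
    using f(2) prime_elem_dvd_mult_iff by blast
  then show ?case
  proof cases
    case 1
    then obtain g' where g': "g = f * g'"
      by (elim dvdE)
    have "lead_coeff g' = 1"
      using add.prems(2) f(1) g' by (simp add: lead_coeff_mult)
    moreover have "g' dvd prod_mset F"
      using k g' f(2) by (simp add: mult.assoc)
    ultimately obtain G where "G \<subseteq># F" "g' = prod_mset G"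
      using add.IH add.prems(1) by auto
    then show ?thesis
      using g' by (intro exI[of _ "add_mset f G"]) auto
  next
    case 2
    then obtain k' where "k = f * k'"
      by (elim dvdE)
    then have "g dvd prod_mset F"
      using k f(2) by (auto simp: mult.left_commute)
    then obtain G where "G \<subseteq># F" "g = prod_mset G"
      using add.IH add.prems by auto
    then show ?thesis
      using subset_mset.order_trans[of G F "add_mset f F"] by auto
  qed
qed

lemma inj_on_count_submultisets:
  "inj_on (\<lambda>G. restrict (count G) (set_mset F)) {G. G \<subseteq># F}"
proof (rule inj_onI, rule multiset_eqI)
  fix G H x
  assume "G \<in> {G. G \<subseteq># F}" "H \<in> {G. G \<subseteq># F}"
    and "restrict (count G) (set_mset F) = restrict (count H) (set_mset F)"
  then show "count G x = count H x"
    by (cases "x \<in># F") (auto dest!: fun_cong[of _ _ x] mset_subset_eq_count[of _ F x] simp: not_in_iff)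
qed

lemma count_submultisets_subset_PiE:
  "(\<lambda>G. restrict (count G) (set_mset F)) ` {G. G \<subseteq># F} \<subseteq> PiE (set_mset F) (\<lambda>p. {0..count F p})"
  by (auto simp: mset_subset_eq_count)

lemma finite_submultisets: "finite {G. G \<subseteq># F}"
  using inj_on_finite[OF inj_on_count_submultisets count_submultisets_subset_PiE]
  by (simp add: finite_PiE)

lemma card_submultisets_le:
  "card {G. G \<subseteq># F} \<le> (\<Prod>p\<in>set_mset F. count F p + 1)"
  using card_inj_on_le[OF inj_on_count_submultisets count_submultisets_subset_PiE]
  by (simp add: finite_PiE card_PiE)

lemma degree_prod_mset_eq:
  fixes F :: "'a::idom poly multiset"
  assumes "0 \<notin># F"
  shows "degree (prod_mset F) = (\<Sum>p\<in>set_mset F. count F p * degree p)"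
proof -
  have "degree (prod_mset F) = degree (\<Prod>p\<in>set_mset F. p ^ count F p)"
    by (simp add: prod_mset_multiplicity)
  also have "\<dots> = (\<Sum>p\<in>set_mset F. degree (p ^ count F p))"
    using assms by (intro degree_prod_sum_eq) auto
  also have "\<dots> = (\<Sum>p\<in>set_mset F. count F p * degree p)"
  proof (rule sum.cong[OF refl])
    fix p
    assume "p \<in> set_mset F"
    then have "p \<noteq> 0"
      using assms by auto
    then show "degree (p ^ count F p) = count F p * degree p"
      by (simp add: degree_power_eq)
  qed
  finally show ?thesis .
qed

definition divisor_bound :: "nat \<Rightarrow> nat \<Rightarrow> nat \<Rightarrow> nat" where
  "divisor_bound q t M = (M + 1) ^ q ^ t * 2 ^ (M div t)"

lemma prod_Suc_le_pow_card_degree_less: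
  fixes S :: "'a::{finite,zero} poly set" and e :: "'a poly \<Rightarrow> nat"
  assumes "\<forall>p\<in>S. degree p < t \<and> e p \<le> M" and "t \<ge> 1"
  shows "(\<Prod>p\<in>S. e p + 1) \<le> (M + 1) ^ CARD('a) ^ t"
proof -
  have "(\<Prod>p\<in>S. e p + 1) \<le> (\<Prod>p\<in>S. M + 1)"
    using assms(1) by (intro prod_mono) auto
  also have "\<dots> \<le> (M + 1) ^ card S"
    by simp
  also have "\<dots> \<le> (M + 1) ^ CARD('a) ^ t"
  proof (rule power_increasing)
    have "card S \<le> card {p :: 'a poly. degree p \<le> t - 1}"
      using assms by (intro card_mono finite_degree_le) auto
    then show "card S \<le> CARD('a) ^ t"
      using card_degree_le[of "t - 1", where 'a = 'a] assms(2) by simp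
  qed simp
  finally show ?thesis .
qed

lemma prod_Suc_le_two_pow_degree_ge:
  fixes S :: "'a::zero poly set" and e :: "'a poly \<Rightarrow> nat"
  assumes "\<forall>p\<in>S. t \<le> degree p" and "(\<Sum>p\<in>S. e p * degree p) \<le> M" and "t \<ge> 1"
  shows "(\<Prod>p\<in>S. e p + 1) \<le> 2 ^ (M div t)"
proof -
  have "(\<Prod>p\<in>S. e p + 1) \<le> (\<Prod>p\<in>S. 2 ^ e p)"
    by (intro prod_mono) (auto simp: Suc_le_eq)
  also have "\<dots> = 2 ^ (\<Sum>p\<in>S. e p)"
    by (simp add: power_sum)
  also have "\<dots> \<le> 2 ^ (M div t)"
  proof (rule power_increasing)
    have "(\<Sum>p\<in>S. e p) * t = (\<Sum>p\<in>S. e p * t)"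
      by (simp add: sum_distrib_right)
    also have "\<dots> \<le> (\<Sum>p\<in>S. e p * degree p)"
      using assms(1) by (intro sum_mono) simp
    finally show "(\<Sum>p\<in>S. e p) \<le> M div t"
      using assms(2,3) by (simp add: less_eq_div_iff_mult_less_eq)
  qed simp
  finally show ?thesis .
qed

lemma prod_Suc_count_le:
  fixes F :: "'a::{field,finite} poly multiset"
  assumes deg_pos: "\<forall>p\<in>#F. degree p > 0" and deg_F: "degree (prod_mset F) \<le> M" and "t \<ge> 1"
  shows "(\<Prod>p\<in>set_mset F. count F p + 1) \<le> divisor_bound CARD('a) t M"
proof -
  define S where "S = set_mset F"
  define e where "e p = count F p" for p
  have "0 \<notin># F"
    using deg_pos by auto
  then have sum_deg: "(\<Sum>p\<in>S. e p * degree p) \<le> M"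
    using deg_F degree_prod_mset_eq[of F] by (simp add: S_def e_def)
  have "e p \<le> M" if "p \<in> S" for p
  proof -
    have "1 \<le> degree p"
      using deg_pos that by (auto simp: S_def)
    then have "e p \<le> e p * degree p"
      using mult_le_mono2[of 1 "degree p" "e p"] by simp
    also have "\<dots> \<le> (\<Sum>p\<in>S. e p * degree p)"
      using that by (intro member_le_sum) (auto simp: S_def)
    finally show ?thesis
      using sum_deg by simp
  qed
  then have "(\<Prod>p\<in>S \<inter> {p. degree p < t}. e p + 1) \<le> (M + 1) ^ CARD('a) ^ t"
    using \<open>t \<ge> 1\<close> by (intro prod_Suc_le_pow_card_degree_less) auto
  moreover have "(\<Sum>p\<in>S - {p. degree p < t}. e p * degree p) \<le> M"
    using sum_deg by (rule order.trans[rotated]) (intro sum_mono2, auto simp: S_def)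
  then have "(\<Prod>p\<in>S - {p. degree p < t}. e p + 1) \<le> 2 ^ (M div t)"
    using \<open>t \<ge> 1\<close> by (intro prod_Suc_le_two_pow_degree_ge) auto
  moreover have "(\<Prod>p\<in>S. e p + 1) = (\<Prod>p\<in>S \<inter> {p. degree p < t}. e p + 1) * (\<Prod>p\<in>S - {p. degree p < t}. e p + 1)"
    by (rule prod.Int_Diff) (simp add: S_def)
  ultimately show ?thesis
    by (simp add: S_def e_def divisor_bound_def mult_le_mono)
qed

lemma card_monic_divisors_le:
  fixes Q :: "'a::{field,finite} poly"
  assumes "Q \<noteq> 0" "degree Q \<le> M" "t \<ge> 1"
  shows "card {g. lead_coeff g = 1 \<and> g dvd Q} \<le> divisor_bound CARD('a) t M"
proof -
  define Q' where "Q' = smult (inverse (lead_coeff Q)) Q"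
  obtain F where F: "prod_mset F = Q'" "\<forall>f\<in>#F. lead_coeff f = 1 \<and> irreducible f"
    using monic_irreducible_factorization[of Q'] assms(1) by (auto simp: Q'_def)
  have "{g. lead_coeff g = 1 \<and> g dvd Q} \<subseteq> prod_mset ` {G. G \<subseteq># F}"
  proof
    fix g
    assume g: "g \<in> {g. lead_coeff g = 1 \<and> g dvd Q}"
    then have "g dvd prod_mset F"
      by (simp add: F(1) Q'_def dvd_smult)
    then show "g \<in> prod_mset ` {G. G \<subseteq># F}"
      using monic_dvd_prod_mset_irreducible[OF F(2)] g by blast
  qed
  then have "card {g. lead_coeff g = 1 \<and> g dvd Q} \<le> card (prod_mset ` {G. G \<subseteq># F})"
    by (intro card_mono finite_imageI finite_submultisets)
  also have "\<dots> \<le> card {G. G \<subseteq># F}"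
    by (intro card_image_le finite_submultisets)
  also have "\<dots> \<le> (\<Prod>p\<in>set_mset F. count F p + 1)"
    by (rule card_submultisets_le)
  also have "\<dots> \<le> divisor_bound CARD('a) t M"
  proof (rule prod_Suc_count_le)
    show "\<forall>p\<in>#F. degree p > 0"
      using F(2) by (auto simp: irreducible_def is_unit_iff_degree)
    show "degree (prod_mset F) \<le> M"
      using assms(2) by (simp add: F(1) Q'_def)
  qed fact
  finally show ?thesis .
qed

lemma one_le_divisor_bound: "1 \<le> divisor_bound q t M"
  by (simp add: divisor_bound_def)

lemma divisor_bound_le_powr:
  assumes "t \<ge> 1" and "real M \<le> X"
  shows "real (divisor_bound q t M) \<le> (X + 1) powr real (q ^ t) * 2 powr (X / t)"
proof -
  have base: "real (M + 1) powr real (q ^ t) \<le> (X + 1) powr real (q ^ t)"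
    using assms(2) by (intro powr_mono2) auto
  have "real (M div t) \<le> real M / real t"
    by (rule of_nat_div_le_of_nat)
  also have "\<dots> \<le> X / t"
    using assms(2) by (simp add: divide_right_mono)
  finally have "2 powr real (M div t) \<le> 2 powr (X / t)"
    by (intro powr_mono) auto
  moreover have "real (divisor_bound q t M) = real (M + 1) powr real (q ^ t) * 2 powr real (M div t)"
    unfolding divisor_bound_def by (subst (1 2) powr_realpow) auto
  ultimately show ?thesis
    using base by (simp add: mult_mono)
qed

lemma card_le_card_image_mult:
  assumes "finite A" and "\<And>y. y \<in> f ` A \<Longrightarrow> card {x\<in>A. f x = y} \<le> b"
  shows "card A \<le> card (f ` A) * b"
proof -
  have "A = (\<Union>y\<in>f ` A. {x\<in>A. f x = y})"
    by auto
  then have "card A \<le> (\<Sum>y\<in>f ` A. card {x\<in>A. f x = y})"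
    using card_UN_le[of "f ` A" "\<lambda>y. {x\<in>A. f x = y}"] assms(1) by simp
  also have "\<dots> \<le> card (f ` A) * b"
    using sum_mono[of "f ` A" _ "\<lambda>_. b"] assms(2) by simp
  finally show ?thesis .
qed

lemma card_monic_le_encoding:
  fixes S :: "'a::{field,finite} poly set" and \<Phi> :: "'a poly \<Rightarrow> 'a poly"
  assumes "finite S" and "finite T" and "\<psi> ` S \<subseteq> T" and "t \<ge> 1"
    and "\<And>g. g \<in> S \<Longrightarrow> lead_coeff g = 1 \<and> g dvd \<Phi> g \<and> \<Phi> g \<noteq> 0 \<and> degree (\<Phi> g) \<le> M"
    and "\<And>g g'. g \<in> S \<Longrightarrow> g' \<in> S \<Longrightarrow> \<psi> g = \<psi> g' \<Longrightarrow> \<Phi> g = \<Phi> g'"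
  shows "card S \<le> card T * divisor_bound CARD('a) t M"
proof -
  have "card {g\<in>S. \<psi> g = \<psi> g0} \<le> divisor_bound CARD('a) t M" if "g0 \<in> S" for g0
  proof -
    have "{g\<in>S. \<psi> g = \<psi> g0} \<subseteq> {g. lead_coeff g = 1 \<and> g dvd \<Phi> g0}"
    proof
      fix g
      assume "g \<in> {g\<in>S. \<psi> g = \<psi> g0}"
      then show "g \<in> {g. lead_coeff g = 1 \<and> g dvd \<Phi> g0}"
        using assms(5)[of g] assms(6)[of g g0] that by simp
    qed
    moreover have "{g. lead_coeff g = 1 \<and> g dvd \<Phi> g0} \<subseteq> {p. degree p \<le> degree (\<Phi> g0)}"
      using assms(5)[OF that] dvd_imp_degree_le by blast
    ultimately have "card {g\<in>S. \<psi> g = \<psi> g0} \<le> card {g. lead_coeff g = 1 \<and> g dvd \<Phi> g0}"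
      by (intro card_mono finite_subset[OF _ finite_degree_le])
    also have "\<dots> \<le> divisor_bound CARD('a) t M"
      using assms(4) assms(5)[OF that] by (intro card_monic_divisors_le) auto
    finally show ?thesis .
  qed
  then have "card S \<le> card (\<psi> ` S) * divisor_bound CARD('a) t M"
    using assms(1) by (intro card_le_card_image_mult) auto
  also have "\<dots> \<le> card T * divisor_bound CARD('a) t M"
    using card_mono[OF assms(2,3)] by simp
  finally show ?thesis .
qed

section \<open>Reversal of polynomials\<close>

text \<open>\<open>reverse_poly N p\<close> is \<open>z\<^sup>N p(1/z)\<close>, for \<open>degree p \<le> N\<close>.\<close>

definition reverse_poly :: "nat \<Rightarrow> 'a::comm_ring_1 poly \<Rightarrow> 'a poly" where
  "reverse_poly N p = monom 1 (N - degree p) * reflect_poly p"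

lemma coeff_reverse_poly:
  assumes "degree p \<le> N"
  shows "coeff (reverse_poly N p) r = (if r \<le> N then coeff p (N - r) else 0)"
proof -
  have "coeff (reverse_poly N p) r
      = (if r < N - degree p then 0 else coeff (reflect_poly p) (r - (N - degree p)))"
    unfolding reverse_poly_def by (simp add: coeff_monom_mult)
  also have "\<dots> = (if r \<le> N then coeff p (N - r) else 0)"
    using assms by (auto simp: coeff_reflect_poly coeff_eq_0)
  finally show ?thesis .
qed

lemma degree_reverse_poly_le: "degree p \<le> N \<Longrightarrow> degree (reverse_poly N p) \<le> N"
  by (rule degree_le) (simp add: coeff_reverse_poly)

lemma reverse_poly_0 [simp]: "reverse_poly N 0 = 0"
  by (simp add: reverse_poly_def)

lemma reverse_poly_reverse_poly: "degree p \<le> N \<Longrightarrow> reverse_poly N (reverse_poly N p) = p"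
  by (rule poly_eqI) (auto simp: coeff_reverse_poly degree_reverse_poly_le coeff_eq_0)

lemma reverse_poly_mult:
  fixes p q :: "'a::idom poly"
  assumes "degree p \<le> M" "degree q \<le> N"
  shows "reverse_poly (M + N) (p * q) = reverse_poly M p * reverse_poly N q"
proof (cases "p = 0 \<or> q = 0")
  case True
  then show ?thesis
    by (auto simp: reverse_poly_def)
next
  case False
  then have "monom (1::'a) (M + N - degree (p * q)) = monom 1 (M - degree p) * monom 1 (N - degree q)"
    using assms by (simp add: degree_mult_eq mult_monom)
  then show ?thesis
    unfolding reverse_poly_def by (simp add: reflect_poly_mult ac_simps)
qed

lemma reverse_poly_add:
  "degree p \<le> N \<Longrightarrow> degree q \<le> N \<Longrightarrow> reverse_poly N (p + q) = reverse_poly N p + reverse_poly N q"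
  by (rule poly_eqI) (simp add: coeff_reverse_poly degree_add_le)

lemma reverse_poly_smult: "degree p \<le> N \<Longrightarrow> reverse_poly N (smult s p) = smult s (reverse_poly N p)"
  by (rule poly_eqI) (simp add: coeff_reverse_poly order.trans[OF degree_smult_le])

lemma reverse_poly_monom_mult:
  assumes "degree p \<le> N"
  shows "reverse_poly (N + 2 * a) (monom 1 a * p) = monom 1 a * reverse_poly N p"
proof -
  have "degree (monom 1 a * p) \<le> N + 2 * a"
    using assms by (intro degree_le) (auto simp: coeff_monom_mult coeff_eq_0)
  then show ?thesis
    using assms by (intro poly_eqI)
      (auto simp: coeff_reverse_poly coeff_monom_mult coeff_eq_0 add.commute)
qed

lemma coeff_mult_reverse_poly:
  assumes "degree w \<le> M"
  shows "(\<Sum>j\<le>M. coeff w j * coeff X (j + n)) = coeff (X * reverse_poly M w) (n + M)"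
proof -
  have "coeff (X * reverse_poly M w) (n + M) = (\<Sum>i\<le>n + M. coeff X i * coeff (reverse_poly M w) (n + M - i))"
    by (simp add: coeff_mult)
  also have "\<dots> = (\<Sum>i\<le>n + M. if n \<le> i then coeff X i * coeff w (i - n) else 0)"
    using assms by (intro sum.cong) (auto simp: coeff_reverse_poly)
  also have "\<dots> = (\<Sum>i\<in>{n..n + M}. coeff X i * coeff w (i - n))"
    by (rule sum.mono_neutral_cong_right) auto
  also have "\<dots> = (\<Sum>j\<in>{0..M}. coeff X (j + n) * coeff w j)"
    using sum.shift_bounds_cl_nat_ivl[of "\<lambda>i. coeff X i * coeff w (i - n)" 0 n M]
    by (simp add: add.commute)
  finally show ?thesis
    by (simp add: atLeast0AtMost mult.commute)
qed

text \<open>Since \<open>M \<le> lo + hi\<close>, the gap \<open>[lo, hi]\<close> reaches past the centre \<open>M/2\<close>, so by the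
  symmetry the coefficients above the gap are mirrors of those below it.\<close>

lemma poly_eq_by_low_coeffs:
  fixes P P' :: "'a::comm_ring_1 poly"
  assumes "degree P \<le> M" "degree P' \<le> M"
    and "reverse_poly M P = smult s P" "reverse_poly M P' = smult s P'"
    and "\<And>j. lo \<le> j \<Longrightarrow> j \<le> hi \<Longrightarrow> coeff P j = 0" "\<And>j. lo \<le> j \<Longrightarrow> j \<le> hi \<Longrightarrow> coeff P' j = 0"
    and "M \<le> lo + hi" and "\<And>j. j < lo \<Longrightarrow> coeff P j = coeff P' j"
  shows "P = P'"
proof (rule poly_eqI)
  fix j
  have sym: "coeff p j = s * coeff p (M - j)" if "degree p \<le> M" "reverse_poly M p = smult s p" "j \<le> M"
    for p :: "'a poly"
    using coeff_reverse_poly[OF that(1), of "M - j"] that by simp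
  consider "j < lo" | "lo \<le> j" "j \<le> hi" | "hi < j" "j \<le> M" | "M < j"
    by linarith
  then show "coeff P j = coeff P' j"
  proof cases
    case 1
    then show ?thesis
      by (rule assms(8))
  next
    case 2
    then show ?thesis
      using assms(5,6) by simp
  next
    case 3
    then show ?thesis
      using sym[OF assms(1,3)] sym[OF assms(2,4)] assms(7) assms(8)[of "M - j"] by simp
  next
    case 4
    then show ?thesis
      using assms(1,2) by (simp add: coeff_eq_0)
  qed
qed

section \<open>The Gram polynomial and the radical\<close>

lemma ct_shift_eq_sum:
  fixes f h :: "'a::comm_ring_1 poly"
  assumes "degree h \<le> M" and "0 \<le> int m + k"
  shows "ct_shift k f h = (\<Sum>j\<le>M. coeff h j * coeff (monom 1 (nat (int m + k)) * f) (j + m))"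
proof -
  have inner: "(\<Sum>i\<le>degree f. if int i - int j + k = 0 then coeff f i * coeff h j else 0)
      = coeff h j * coeff (monom 1 (nat (int m + k)) * f) (j + m)" for j
  proof (cases "k \<le> int j")
    case True
    define i where "i = nat (int j - k)"
    have "(\<Sum>i'\<le>degree f. if int i' - int j + k = 0 then coeff f i' * coeff h j else 0)
        = (\<Sum>i'\<le>degree f. if i' = i then coeff f i' * coeff h j else 0)"
      using True by (intro sum.cong) (auto simp: i_def)
    also have "\<dots> = coeff f i * coeff h j"
      by (auto simp: coeff_eq_0)
    also have "coeff f i = coeff (monom 1 (nat (int m + k)) * f) (j + m)"
    proof -
      have "\<not> j + m < nat (int m + k)" "j + m - nat (int m + k) = i"
        using True assms(2) unfolding i_def by linarith+
      then show ?thesis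
        by (simp add: coeff_monom_mult)
    qed
    finally show ?thesis
      by (simp add: mult.commute)
  next
    case False
    then show ?thesis
      using assms(2) by (auto simp: coeff_monom_mult intro!: sum.neutral)
  qed
  have "ct_shift k f h
      = (\<Sum>j\<le>degree h. \<Sum>i\<le>degree f. if int i - int j + k = 0 then coeff f i * coeff h j else 0)"
    unfolding ct_shift_def by (rule sum.swap)
  also have "\<dots> = (\<Sum>j\<le>M. coeff h j * coeff (monom 1 (nat (int m + k)) * f) (j + m))"
    using assms(1) by (simp add: inner) (intro sum.mono_neutral_left, auto simp: coeff_eq_0)
  finally show ?thesis .
qed

text \<open>\<open>symbol_poly c m\<close> is \<open>z\<^sup>m A(z)\<close>.\<close>

definition symbol_poly :: "(nat \<Rightarrow> 'a::field) \<Rightarrow> nat \<Rightarrow> 'a poly" where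
  "symbol_poly c m = smult (c 0) (monom 1 m)
     + smult (inverse 2) (\<Sum>l\<in>{1..m}. smult (c l) (monom 1 (m + l) + monom 1 (m - l)))"

lemma B_A_eq_sum:
  fixes f h :: "'a::field poly"
  assumes "degree h \<le> M"
  shows "B_A c m f h = (\<Sum>j\<le>M. coeff h j * coeff (symbol_poly c m * f) (j + m))"
proof -
  define T where "T n = (\<Sum>j\<le>M. coeff h j * coeff (monom 1 n * f) (j + m))" for n
  have "ct_shift 0 f h = T m"
    using ct_shift_eq_sum[OF assms, of m 0] by (simp add: T_def)
  moreover have "ct_shift (int l) f h = T (m + l)" for l
    using ct_shift_eq_sum[OF assms, of m "int l"] by (simp add: T_def nat_add_distrib)
  moreover have "ct_shift (- int l) f h = T (m - l)" if "l \<in> {1..m}" for l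
  proof -
    have "nat (int m + - int l) = m - l"
      using that by simp
    then show ?thesis
      using ct_shift_eq_sum[OF assms, of m "- int l"] that by (simp add: T_def)
  qed
  ultimately have "B_A c m f h = c 0 * T m + inverse 2 * (\<Sum>l\<in>{1..m}. c l * (T (m + l) + T (m - l)))"
    unfolding B_A_def by simp
  also have "\<dots> = (\<Sum>j\<le>M. coeff h j * coeff (symbol_poly c m * f) (j + m))"
  proof -
    have "coeff (symbol_poly c m * f) i = c 0 * coeff (monom 1 m * f) i
        + inverse 2 * (\<Sum>l\<in>{1..m}. c l * (coeff (monom 1 (m + l) * f) i + coeff (monom 1 (m - l) * f) i))"
      for i
      by (simp add: symbol_poly_def distrib_right sum_distrib_right coeff_sum)
    then show ?thesis
      unfolding T_def
      by (simp add: algebra_simps sum.distrib sum_distrib_left) (rule arg_cong2[where f = "(+)"]; rule sum.swap)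
  qed
  finally show ?thesis .
qed

lemma coeff_symbol_poly:
  "coeff (symbol_poly c m) r
     = c 0 * of_bool (m = r) + inverse 2 * (\<Sum>l\<in>{1..m}. c l * (of_bool (m + l = r) + of_bool (m - l = r)))"
  by (simp add: symbol_poly_def coeff_sum coeff_monom of_bool_def)

lemma degree_symbol_poly_le: "degree (symbol_poly c m) \<le> 2 * m"
  by (rule degree_le) (auto simp: coeff_symbol_poly intro!: sum.neutral)

lemma reverse_symbol_poly: "reverse_poly (2 * m) (symbol_poly c m) = symbol_poly c m"
proof (rule poly_eqI)
  fix r
  have "coeff (symbol_poly c m) (2 * m - r) = coeff (symbol_poly c m) r" if "r \<le> 2 * m"
  proof -
    have "(m + l = 2 * m - r) = (m - l = r) \<and> (m - l = 2 * m - r) = (m + l = r)" if "l \<in> {1..m}" for l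
      using \<open>r \<le> 2 * m\<close> that by auto
    then show ?thesis
      using that by (auto simp: coeff_symbol_poly add.commute intro!: sum.cong)
  qed
  moreover have "coeff (symbol_poly c m) r = 0" if "\<not> r \<le> 2 * m"
    using degree_symbol_poly_le[of c m] that by (intro coeff_eq_0) simp
  ultimately show "coeff (reverse_poly (2 * m) (symbol_poly c m)) r = coeff (symbol_poly c m) r"
    by (simp add: coeff_reverse_poly degree_symbol_poly_le)
qed

lemma symbol_poly_nonzero:
  assumes "c m \<noteq> 0" "(2::'a::field) \<noteq> 0"
  shows "symbol_poly c m \<noteq> (0 :: 'a poly)"
proof -
  have "(\<Sum>l\<in>{1..m}. c l * (of_bool (m + l = 2 * m) + of_bool (m - l = 2 * m)))
      = (\<Sum>l\<in>{1..m}. if l = m then c l else 0)"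
    by (intro sum.cong) auto
  also have "\<dots> = (if m = 0 then 0 else c m)"
    by (simp add: sum.delta')
  finally have "coeff (symbol_poly c m) (2 * m) \<noteq> 0"
    using assms by (cases "m = 0") (simp_all add: coeff_symbol_poly)
  then show ?thesis
    by auto
qed

text \<open>\<open>gram_poly c m g\<close> is \<open>Q\<^sub>g = z\<^bsup>m + deg g\<^esup> A(z) g(z) g(1/z)\<close>.\<close>

definition gram_poly :: "(nat \<Rightarrow> 'a::field) \<Rightarrow> nat \<Rightarrow> 'a poly \<Rightarrow> 'a poly" where
  "gram_poly c m g = symbol_poly c m * g * reverse_poly (degree g) g"

lemma degree_gram_poly_le: "degree (gram_poly c m g) \<le> 2 * (degree g + m)"
proof -
  have "degree (gram_poly c m g) \<le> degree (symbol_poly c m) + degree g + degree (reverse_poly (degree g) g)"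
    unfolding gram_poly_def by (meson add_le_mono degree_mult_le le_refl order_trans)
  also have "\<dots> \<le> 2 * m + degree g + degree g"
    using degree_symbol_poly_le[of c m] degree_reverse_poly_le[of g "degree g"] by simp
  finally show ?thesis
    by simp
qed

lemma reverse_gram_poly: "reverse_poly (2 * (degree g + m)) (gram_poly c m g) = gram_poly c m g"
proof -
  have "reverse_poly (2 * m + (degree g + degree g)) (symbol_poly c m * (g * reverse_poly (degree g) g))
      = reverse_poly (2 * m) (symbol_poly c m) * reverse_poly (degree g + degree g) (g * reverse_poly (degree g) g)"
    by (rule reverse_poly_mult[OF degree_symbol_poly_le])
      (rule order.trans[OF degree_mult_le], simp add: degree_reverse_poly_le)
  also have "reverse_poly (degree g + degree g) (g * reverse_poly (degree g) g) = reverse_poly (degree g) g * g"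
    by (simp add: reverse_poly_mult degree_reverse_poly_le reverse_poly_reverse_poly)
  finally show ?thesis
    unfolding gram_poly_def reverse_symbol_poly by (simp add: ac_simps)
qed

lemma gram_poly_nonzero:
  assumes "c m \<noteq> 0" "(2::'a::field) \<noteq> 0" "g \<noteq> (0::'a poly)"
  shows "gram_poly c m g \<noteq> 0"
proof -
  have "reverse_poly (degree g) g \<noteq> 0"
    using assms(3) reverse_poly_reverse_poly[of g "degree g"] by auto
  then show ?thesis
    unfolding gram_poly_def using symbol_poly_nonzero[of c m, OF assms(1,2)] assms(3) by simp
qed

lemma B_A_mult_eq_sum:
  fixes g h w :: "'a::field poly"
  assumes "degree h \<le> N" and "degree w \<le> N"
  shows "B_A c m (g * h) (g * w) = (\<Sum>k\<le>N. coeff w k * coeff (gram_poly c m g * h) (k + (degree g + m)))"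
proof -
  have deg_gw: "degree (g * w) \<le> degree g + N"
    using assms(2) by (meson add_le_mono degree_mult_le le_refl order_trans)
  have "B_A c m (g * h) (g * w) = (\<Sum>j\<le>degree g + N. coeff (g * w) j * coeff (symbol_poly c m * (g * h)) (j + m))"
    by (rule B_A_eq_sum[OF deg_gw])
  also have "\<dots> = coeff (symbol_poly c m * (g * h) * reverse_poly (degree g + N) (g * w)) (m + (degree g + N))"
    by (rule coeff_mult_reverse_poly[OF deg_gw])
  also have "\<dots> = coeff (gram_poly c m g * h * reverse_poly N w) ((degree g + m) + N)"
    using reverse_poly_mult[OF le_refl assms(2), of g] by (simp add: gram_poly_def ac_simps)
  also have "\<dots> = (\<Sum>k\<le>N. coeff w k * coeff (gram_poly c m g * h) (k + (degree g + m)))"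
    by (rule coeff_mult_reverse_poly[OF assms(2), symmetric])
  finally show ?thesis .
qed

lemma rad_B_eq:
  "rad_B c m g N = {h. degree h \<le> N \<and> (\<forall>k\<le>N. coeff (gram_poly c m g * h) (k + (degree g + m)) = 0)}"
proof (intro set_eqI iffI)
  fix h
  assume h: "h \<in> rad_B c m g N"
  then have deg_h: "degree h \<le> N"
    by (simp add: rad_B_def V_def)
  have "coeff (gram_poly c m g * h) (k + (degree g + m)) = 0" if "k \<le> N" for k
  proof -
    have "0 = B_A c m (g * h) (g * monom 1 k)"
      using h that by (simp add: rad_B_def V_def degree_monom_eq)
    also have "\<dots> = (\<Sum>k'\<le>N. coeff (monom 1 k) k' * coeff (gram_poly c m g * h) (k' + (degree g + m)))"
      using that by (intro B_A_mult_eq_sum[OF deg_h]) (simp add: degree_monom_eq)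
    also have "\<dots> = (\<Sum>k'\<le>N. if k = k' then coeff (gram_poly c m g * h) (k' + (degree g + m)) else 0)"
      by (intro sum.cong refl) simp
    also have "\<dots> = coeff (gram_poly c m g * h) (k + (degree g + m))"
      using that by simp
    finally show ?thesis
      by simp
  qed
  with deg_h show "h \<in> {h. degree h \<le> N \<and> (\<forall>k\<le>N. coeff (gram_poly c m g * h) (k + (degree g + m)) = 0)}"
    by simp
next
  fix h
  assume "h \<in> {h. degree h \<le> N \<and> (\<forall>k\<le>N. coeff (gram_poly c m g * h) (k + (degree g + m)) = 0)}"
  then show "h \<in> rad_B c m g N"
    by (auto simp: rad_B_def V_def B_A_mult_eq_sum)
qed

lemma (in vector_space) card_scalars_pow_dim_le:
  assumes "finite S" and "subspace S"
  shows "CARD('a) ^ dim S \<le> card S"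
proof -
  obtain B where B: "B \<subseteq> S" "independent B" "S \<subseteq> span B" "card B = dim S"
    by (rule basis_exists)
  have "finite B"
    using B(1) assms(1) finite_subset by blast
  define comb where "comb F = (\<Sum>b\<in>B. F b *s b)" for F :: "'b \<Rightarrow> 'a"
  have "comb ` PiE B (\<lambda>_. UNIV) \<subseteq> S"
    using B(1) assms(2) by (auto simp: comb_def intro!: subspace_sum subspace_scale)
  moreover have "inj_on comb (PiE B (\<lambda>_. UNIV))"
  proof (rule inj_onI)
    fix F G
    assume F: "F \<in> PiE B (\<lambda>_. UNIV)" and G: "G \<in> PiE B (\<lambda>_. UNIV)" and "comb F = comb G"
    then have "(\<Sum>b\<in>B. (F b - G b) *s b) = 0"
      by (simp add: comb_def scale_left_diff_distrib sum_subtractf)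
    then have "F b = G b" if "b \<in> B" for b
      using independentD[OF B(2) \<open>finite B\<close> subset_refl, of "\<lambda>b. F b - G b" b] that by simp
    then show "F = G"
      using F G by (intro PiE_ext) auto
  qed
  ultimately have "card (PiE B (\<lambda>_. UNIV :: 'a set)) \<le> card S"
    using assms(1) by (intro card_inj_on_le)
  then show ?thesis
    using \<open>finite B\<close> B(4) by (simp add: card_PiE)
qed

interpretation poly_smult: vector_space "smult :: 'a::field \<Rightarrow> 'a poly \<Rightarrow> 'a poly"
  by unfold_locales (simp_all add: smult_add_right smult_add_left)

lemma rad_B_subset: "rad_B c m g N \<subseteq> {h. degree h \<le> N}"
  by (auto simp: rad_B_def V_def)

lemma finite_rad_B: "finite (rad_B c m (g :: 'a::{field,finite} poly) N)"
  by (rule finite_subset[OF rad_B_subset finite_degree_le])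

lemma subspace_rad_B: "poly_smult.subspace (rad_B c m g N)"
  unfolding poly_smult.subspace_def rad_B_eq
  by (auto simp: distrib_left degree_add_le order.trans[OF degree_smult_le])

lemma card_rad_B_ge: "CARD('a) ^ Delta_A c m g N \<le> card (rad_B c m (g :: 'a::{field,finite} poly) N)"
  unfolding Delta_A_def
  by (rule poly_smult.card_scalars_pow_dim_le[OF finite_rad_B subspace_rad_B])

lemma Delta_A_le: "Delta_A c m (g :: 'a::{field,finite} poly) N \<le> N + 1"
proof -
  have "CARD('a) ^ Delta_A c m g N \<le> CARD('a) ^ Suc N"
    using card_rad_B_ge card_mono[OF finite_degree_le rad_B_subset] card_degree_le[of N, where 'a = 'a]
    by (metis order.trans)
  then have "Delta_A c m g N \<le> Suc N"
    by (rule power_le_imp_le_exp[OF one_less_card_field])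
  then show ?thesis
    by simp
qed

lemma reverse_poly_mem_rad_B:
  assumes "h \<in> rad_B c m g N"
  shows "reverse_poly N h \<in> rad_B c m g N"
proof -
  let ?K = "degree g + m"
  let ?Q = "gram_poly c m g"
  have deg_h: "degree h \<le> N" and vanish: "\<forall>k\<le>N. coeff (?Q * h) (k + ?K) = 0"
    using assms unfolding rad_B_eq by auto
  have deg_Qh: "degree (?Q * h) \<le> 2 * ?K + N"
    using degree_gram_poly_le[of c m g] deg_h by (meson add_le_mono degree_mult_le order_trans)
  have "reverse_poly (2 * ?K + N) (?Q * h) = ?Q * reverse_poly N h"
    using reverse_poly_mult[OF degree_gram_poly_le[of c m g] deg_h] unfolding reverse_gram_poly .
  have "coeff (?Q * reverse_poly N h) (k + ?K) = 0" if "k \<le> N" for k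
  proof -
    have "coeff (reverse_poly (2 * ?K + N) (?Q * h)) (k + ?K) = coeff (?Q * h) (2 * ?K + N - (k + ?K))"
      using that by (subst coeff_reverse_poly[OF deg_Qh]) simp
    moreover have "2 * ?K + N - (k + ?K) = (N - k) + ?K"
      using that by simp
    ultimately have "coeff (?Q * reverse_poly N h) (k + ?K) = coeff (?Q * h) ((N - k) + ?K)"
      by (simp only: \<open>reverse_poly _ _ = _\<close>)
    then show ?thesis
      using vanish[rule_format, of "N - k"] by simp
  qed
  then show ?thesis
    unfolding rad_B_eq using degree_reverse_poly_le[OF deg_h] by simp
qed

section \<open>Symmetric vectors in the radical\<close>

lemma exists_nonzero_in_inter:
  fixes R W V :: "'b::ab_group_add set"
  assumes "finite V" "R \<subseteq> V" "W \<subseteq> V"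
    and "\<And>x y. x \<in> R \<Longrightarrow> y \<in> R \<Longrightarrow> x - y \<in> R"
    and "\<And>x y. x \<in> W \<Longrightarrow> y \<in> W \<Longrightarrow> x - y \<in> W"
    and "\<And>x y. x \<in> V \<Longrightarrow> y \<in> V \<Longrightarrow> x - y \<in> V"
    and "card V < card R * card W"
  shows "\<exists>x\<in>R \<inter> W. x \<noteq> 0"
proof -
  have "\<not> inj_on (\<lambda>(x, y). x - y) (R \<times> W)"
  proof
    assume "inj_on (\<lambda>(x, y). x - y) (R \<times> W)"
    moreover have "(\<lambda>(x, y). x - y) ` (R \<times> W) \<subseteq> V"
      using assms(2,3,6) by auto
    ultimately have "card (R \<times> W) \<le> card V"
      using assms(1) by (intro card_inj_on_le)
    then show False
      using assms(7) by (simp add: card_cartesian_product)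
  qed
  then obtain x y x' y' where "x \<in> R" "x' \<in> R" "y \<in> W" "y' \<in> W" "(x, y) \<noteq> (x', y')" "x - y = x' - y'"
    unfolding inj_on_def by auto
  moreover have "x - x' = y - y'"
    using \<open>x - y = x' - y'\<close> by (simp add: algebra_simps)
  ultimately have "x - x' \<in> R \<inter> W" "x - x' \<noteq> 0"
    using assms(4)[of x x'] assms(5)[of y y'] by auto
  then show ?thesis
    by blast
qed

text \<open>The radical and \<open>z\<^sup>a V\<^bsub>N - 2a\<^esub>\<close> have \<open>q\<^sup>\<delta> \<cdot> q\<^bsup>N - 2a + 1\<^esup> > q\<^bsup>N + 1\<^esup> = |V\<^sub>N|\<close> pairs of
  elements, so two pairs have the same difference.\<close>

lemma exists_shifted_in_rad_B:
  fixes g :: "'a::{field,finite} poly"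
  assumes "\<delta> \<le> Delta_A c m g N" and "2 * a < \<delta>"
  obtains v where "v \<noteq> 0" "degree v \<le> N - 2 * a" "monom 1 a * v \<in> rad_B c m g N"
proof -
  define D where "D = N - 2 * a"
  define W where "W = (\<lambda>v. monom (1::'a) a * v) ` {v. degree v \<le> D}"
  let ?R = "rad_B c m g N" and ?V = "{h :: 'a poly. degree h \<le> N}"
  have N_eq: "N = D + 2 * a"
    using Delta_A_le[of c m g N] assms by (simp add: D_def)
  have inj: "inj_on (\<lambda>v. monom (1::'a) a * v) {v. degree v \<le> D}"
    by (auto intro!: inj_onI)
  have "card W = CARD('a) ^ Suc D"
    unfolding W_def card_image[OF inj] by (rule card_degree_le)
  moreover have "CARD('a) ^ \<delta> \<le> card ?R"
    using power_increasing[OF assms(1), of "CARD('a)"] card_rad_B_ge[of c m g N] by simp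
  moreover have "CARD('a) ^ Suc N < CARD('a) ^ \<delta> * CARD('a) ^ Suc D"
    using one_less_card_field[where 'a = 'a] assms(2) N_eq by (simp flip: power_add)
  ultimately have card_lt: "card ?V < card ?R * card W"
    using card_degree_le[of N, where 'a = 'a] by (metis less_le_trans mult_le_mono1)
  have W_sub: "W \<subseteq> ?V"
  proof
    fix x
    assume "x \<in> W"
    then obtain v where "x = monom 1 a * v" "degree v \<le> D"
      by (auto simp: W_def)
    then show "x \<in> ?V"
      using degree_mult_le[of "monom (1::'a) a" v] N_eq by (simp add: degree_monom_eq)
  qed
  have W_diff: "x - y \<in> W" if x: "x \<in> W" and y: "y \<in> W" for x y
  proof -
    obtain v where "x = monom 1 a * v" "degree v \<le> D"
      using x unfolding W_def by blast
    moreover obtain w where "y = monom 1 a * w" "degree w \<le> D"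
      using y unfolding W_def by blast
    ultimately have "x - y = monom 1 a * (v - w)" "degree (v - w) \<le> D"
      by (simp_all add: right_diff_distrib degree_diff_le)
    then show ?thesis
      by (simp add: W_def)
  qed
  have R_diff: "x - y \<in> ?R" if "x \<in> ?R" "y \<in> ?R" for x y
    using poly_smult.subspace_diff[OF subspace_rad_B that] .
  have V_diff: "x - y \<in> ?V" if "x \<in> ?V" "y \<in> ?V" for x y
    using that by (simp add: degree_diff_le)
  have "\<exists>r\<in>?R \<inter> W. r \<noteq> 0"
    by (rule exists_nonzero_in_inter[OF finite_degree_le rad_B_subset W_sub R_diff W_diff V_diff card_lt])
  then show ?thesis
    using that by (auto simp: W_def D_def)
qed

text \<open>One of \<open>v \<plusminus> reverse_poly D v\<close> is nonzero as \<open>2 \<noteq> 0\<close>, and it is symmetric or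
  antisymmetric under reversal.\<close>

lemma exists_sign_reverse_combination:
  fixes v :: "'a::field poly"
  assumes "(2::'a) \<noteq> 0" and "v \<noteq> 0" and "degree v \<le> D"
  obtains s where "s = 1 \<or> s = -1" "v + smult s (reverse_poly D v) \<noteq> 0"
    "reverse_poly D (v + smult s (reverse_poly D v)) = smult s (v + smult s (reverse_poly D v))"
proof -
  have "v + smult 1 (reverse_poly D v) \<noteq> 0 \<or> v + smult (-1) (reverse_poly D v) \<noteq> 0"
  proof (rule ccontr)
    assume "\<not> ?thesis"
    then have "v + reverse_poly D v = 0" "v + - reverse_poly D v = 0"
      by (simp_all only: de_Morgan_disj not_not smult_minus_left smult_1_left)
    then have "(v + reverse_poly D v) + (v + - reverse_poly D v) = 0"
      by (simp only: add_0)
    moreover have "(v + reverse_poly D v) + (v + - reverse_poly D v) = smult 2 v"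
      using smult_add_left[of 1 1 v] by simp
    ultimately show False
      using assms(1,2) by simp
  qed
  then obtain s :: 'a where s: "s = 1 \<or> s = -1" "v + smult s (reverse_poly D v) \<noteq> 0"
    by blast
  have deg_rev: "degree (smult s (reverse_poly D v)) \<le> D"
    using degree_reverse_poly_le[OF assms(3)] order.trans[OF degree_smult_le] by blast
  have "reverse_poly D (v + smult s (reverse_poly D v)) = reverse_poly D v + smult s v"
    using assms(3) deg_rev degree_reverse_poly_le[OF assms(3)]
    by (simp add: reverse_poly_add reverse_poly_smult reverse_poly_reverse_poly)
  also have "\<dots> = smult s (v + smult s (reverse_poly D v))"
  proof -
    have "s * s = 1"
      using s(1) by auto
    then show ?thesis
      by (simp add: smult_add_right add.commute)
  qed
  finally show ?thesis
    using that s by blast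
qed

lemma exists_symmetric_in_rad_B:
  fixes g :: "'a::{field,finite} poly"
  assumes "(2::'a) \<noteq> 0" and "\<delta> \<le> Delta_A c m g N" and "2 * a < \<delta>"
  obtains s :: 'a and u :: "'a poly"
  where "s = 1 \<or> s = -1" "u \<noteq> 0" "degree u \<le> N - 2 * a"
    "reverse_poly (N - 2 * a) u = smult s u" "monom 1 a * u \<in> rad_B c m g N"
proof -
  define D where "D = N - 2 * a"
  obtain v where v: "v \<noteq> 0" "degree v \<le> D" "monom 1 a * v \<in> rad_B c m g N"
    using exists_shifted_in_rad_B[OF assms(2,3)] unfolding D_def .
  have "N = D + 2 * a"
    using Delta_A_le[of c m g N] assms(2,3) by (simp add: D_def)
  then have rev_v: "monom 1 a * reverse_poly D v \<in> rad_B c m g N"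
    using reverse_poly_mem_rad_B[OF v(3)] reverse_poly_monom_mult[OF v(2)] by simp
  obtain s where s: "s = 1 \<or> s = -1" "v + smult s (reverse_poly D v) \<noteq> 0"
    "reverse_poly D (v + smult s (reverse_poly D v)) = smult s (v + smult s (reverse_poly D v))"
    using exists_sign_reverse_combination[OF assms(1) v(1,2)] by blast
  have "degree (v + smult s (reverse_poly D v)) \<le> D"
    using v(2) degree_reverse_poly_le[OF v(2)]
    by (intro degree_add_le) (auto intro: order.trans[OF degree_smult_le])
  moreover have "monom 1 a * (v + smult s (reverse_poly D v)) \<in> rad_B c m g N"
    using poly_smult.subspace_add[OF subspace_rad_B v(3) poly_smult.subspace_scale[OF subspace_rad_B rev_v]]
    by (simp add: distrib_left)
  ultimately show ?thesis
    using that s unfolding D_def by blast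
qed

lemma symmetric_radical_product:
  fixes g u :: "'a::field poly"
  assumes "degree u \<le> N - 2 * a" "2 * a \<le> N" "reverse_poly (N - 2 * a) u = smult s u"
    and "monom 1 a * u \<in> rad_B c m g N"
  defines "K \<equiv> degree g + m"
  shows "degree (gram_poly c m g * u) \<le> 2 * K + (N - 2 * a)"
    and "reverse_poly (2 * K + (N - 2 * a)) (gram_poly c m g * u) = smult s (gram_poly c m g * u)"
    and "\<And>j. K - a \<le> j \<Longrightarrow> j \<le> K + N - a \<Longrightarrow> coeff (gram_poly c m g * u) j = 0"
proof -
  show "degree (gram_poly c m g * u) \<le> 2 * K + (N - 2 * a)"
    using degree_gram_poly_le[of c m g] assms(1) unfolding K_def
    by (meson add_le_mono degree_mult_le order_trans)
  show "reverse_poly (2 * K + (N - 2 * a)) (gram_poly c m g * u) = smult s (gram_poly c m g * u)"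
    using reverse_poly_mult[OF degree_gram_poly_le assms(1)] assms(3) unfolding K_def reverse_gram_poly
    by simp
  fix j
  assume j: "K - a \<le> j" "j \<le> K + N - a"
  have "\<forall>k\<le>N. coeff (gram_poly c m g * (monom 1 a * u)) (k + K) = 0"
    using assms(4) unfolding rad_B_eq K_def by simp
  moreover have "j + a - K \<le> N" "(j + a - K) + K = j + a"
    using j assms(2) by auto
  ultimately have "coeff (gram_poly c m g * (monom 1 a * u)) (j + a) = 0"
    by metis
  then show "coeff (gram_poly c m g * u) j = 0"
    by (simp add: mult.left_commute coeff_monom_mult add.commute)
qed

definition gram_witness :: "(nat \<Rightarrow> 'a::field) \<Rightarrow> nat \<Rightarrow> nat \<Rightarrow> nat \<Rightarrow> 'a poly \<Rightarrow> 'a \<Rightarrow> 'a poly \<Rightarrow> bool"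
  where "gram_witness c m N a g s u \<longleftrightarrow> (s = 1 \<or> s = -1) \<and> u \<noteq> 0 \<and> degree u \<le> N - 2 * a
    \<and> degree (gram_poly c m g * u) \<le> 2 * (degree g + m) + (N - 2 * a)
    \<and> reverse_poly (2 * (degree g + m) + (N - 2 * a)) (gram_poly c m g * u) = smult s (gram_poly c m g * u)
    \<and> (\<forall>j. degree g + m - a \<le> j \<and> j \<le> degree g + m + N - a \<longrightarrow> coeff (gram_poly c m g * u) j = 0)"

lemma exists_gram_witness:
  fixes g :: "'a::{field,finite} poly"
  assumes "(2::'a) \<noteq> 0" and "\<delta> \<le> Delta_A c m g N" and "2 * a < \<delta>"
  shows "\<exists>s u. gram_witness c m N a g s u"
proof -
  obtain s u where su: "s = 1 \<or> s = -1" "u \<noteq> 0" "degree u \<le> N - 2 * a"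
    "reverse_poly (N - 2 * a) u = smult s u" "monom 1 a * u \<in> rad_B c m g N"
    by (rule exists_symmetric_in_rad_B[OF assms])
  moreover have "2 * a \<le> N"
    using Delta_A_le[of c m g N] assms(2,3) by simp
  ultimately have "gram_witness c m N a g s u"
    using symmetric_radical_product[OF su(3) _ su(4,5)] by (simp add: gram_witness_def)
  then show ?thesis
    by blast
qed

lemma gram_poly_eq_if_witnesses_agree:
  assumes "gram_witness c m N a g s u" and "gram_witness c m N a g' s u"
    and "degree g = degree g'" and "2 * a \<le> N"
    and "\<And>j. j < degree g + m - a \<Longrightarrow> coeff (gram_poly c m g * u) j = coeff (gram_poly c m g' * u) j"
  shows "gram_poly c m g = gram_poly c m g'"
proof -
  have w: "degree (gram_poly c m h * u) \<le> 2 * (degree g + m) + (N - 2 * a)"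
    "reverse_poly (2 * (degree g + m) + (N - 2 * a)) (gram_poly c m h * u) = smult s (gram_poly c m h * u)"
    "\<And>j. degree g + m - a \<le> j \<Longrightarrow> j \<le> degree g + m + N - a \<Longrightarrow> coeff (gram_poly c m h * u) j = 0"
    if "gram_witness c m N a h s u" and "degree h = degree g" for h
    using that unfolding gram_witness_def by auto
  note wg = w[OF assms(1) refl] and wg' = w[OF assms(2) assms(3)[symmetric]]
  have "gram_poly c m g * u = gram_poly c m g' * u"
  proof (rule poly_eq_by_low_coeffs[OF wg(1) wg'(1) wg(2) wg'(2) wg(3) wg'(3)])
    show "2 * (degree g + m) + (N - 2 * a) \<le> degree g + m - a + (degree g + m + N - a)"
      using assms(4) by simp
  qed (use assms(5) in auto)
  then show ?thesis
    using assms(1) by (simp add: gram_witness_def)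
qed

section \<open>Counting polynomials with a large radical\<close>

text \<open>The code of \<open>g\<close> is the sign and vector of a witness together with the coefficients of
  \<open>gram_poly c m g * u\<close> below its gap; it determines \<open>gram_poly c m g\<close>, of which \<open>g\<close> is a
  monic divisor.\<close>

lemma card_Delta_A_ge_le:
  fixes c :: "nat \<Rightarrow> 'a::{field,finite}"
  assumes "c m \<noteq> 0" and "(2::'a) \<noteq> 0" and "2 * a < \<delta>" and "t \<ge> 1"
  shows "card {g \<in> Mx \<kappa>. \<delta> \<le> Delta_A c m g N}
    \<le> 2 * CARD('a) ^ (N - 2 * a + 1) * CARD('a) ^ (\<kappa> + m - a) * divisor_bound CARD('a) t (2 * (\<kappa> + m))"
proof -
  define S where "S = {g \<in> Mx \<kappa>. \<delta> \<le> Delta_A c m g N}"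
  define T :: "('a \<times> 'a poly \<times> 'a list) set"
    where "T = {1, -1} \<times> {u. degree u \<le> N - 2 * a} \<times> {xs. length xs = \<kappa> + m - a}"
  have S: "g \<in> Mx \<kappa>" "2 * a \<le> N" if "g \<in> S" for g
    using that Delta_A_le[of c m g N] assms(3) by (auto simp: S_def)
  have "\<forall>g\<in>S. \<exists>s u. gram_witness c m N a g s u"
    using exists_gram_witness[OF assms(2) _ assms(3)] by (simp add: S_def)
  then obtain sgn vec where w: "\<And>g. g \<in> S \<Longrightarrow> gram_witness c m N a g (sgn g) (vec g)"
    by metis
  define \<psi> where "\<psi> g = (sgn g, vec g, map (coeff (gram_poly c m g * vec g)) [0..<\<kappa> + m - a])" for g
  have "card S \<le> card T * divisor_bound CARD('a) t (2 * (\<kappa> + m))"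
  proof (rule card_monic_le_encoding[where \<psi> = \<psi> and \<Phi> = "gram_poly c m"])
    show "finite S"
      unfolding S_def by (rule finite_subset[OF _ finite_Mx]) auto
    show "finite T"
      unfolding T_def using finite_lists_length_eq[of "UNIV :: 'a set"]
      by (intro finite_cartesian_product finite_degree_le) auto
    show "\<psi> ` S \<subseteq> T"
      using w by (auto simp: \<psi>_def T_def gram_witness_def)
    show "lead_coeff g = 1 \<and> g dvd gram_poly c m g \<and> gram_poly c m g \<noteq> 0
        \<and> degree (gram_poly c m g) \<le> 2 * (\<kappa> + m)" if "g \<in> S" for g
    proof -
      have g: "lead_coeff g = 1" "g \<noteq> 0" "degree g = \<kappa>"
        using S(1)[OF that] by (auto simp: Mx_def)
      have "g dvd gram_poly c m g"
        unfolding gram_poly_def by (intro dvd_mult2 dvd_triv_right)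
      then show ?thesis
        using g gram_poly_nonzero[of c m g] assms(1,2) degree_gram_poly_le[of c m g] by simp
    qed
    show "gram_poly c m g = gram_poly c m g'" if "g \<in> S" "g' \<in> S" "\<psi> g = \<psi> g'" for g g'
      using that w[of g] w[of g'] S[OF that(1)] S(1)[OF that(2)]
      by (intro gram_poly_eq_if_witnesses_agree[of c m N a g "sgn g" "vec g"])
        (auto simp: \<psi>_def map_eq_conv Mx_def)
  qed fact
  also have "card T \<le> 2 * (CARD('a) ^ (N - 2 * a + 1) * CARD('a) ^ (\<kappa> + m - a))"
    using card_degree_le[of "N - 2 * a", where 'a = 'a] card_lists_length_eq[of "UNIV :: 'a set"]
    by (auto simp: T_def card_cartesian_product card_insert_if intro!: mult_le_mono1)
  finally show ?thesis
    by (simp add: S_def mult.assoc)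
qed

lemma exponent_bound:
  fixes \<delta> N \<kappa> m :: nat and C :: real
  assumes "3 * real N / 4 < real \<delta>" "\<delta> \<le> N + 1" "real N \<le> 4/3 * real \<kappa> + C" "C \<ge> 0"
  defines "a \<equiv> (\<delta> - 1) div 2"
  shows "real (N - 2 * a + 1) + real (\<kappa> + m - a) + real \<delta> / 2 \<le> real m + 4 + C + (real \<kappa> + 3 * real N / 8)"
proof -
  have a: "real (N - 2 * a + 1) = real N - 2 * real a + 1" "real \<delta> \<le> 2 * real a + 2"
    using assms(1,2) by (auto simp: a_def)
  show ?thesis
  proof (cases "a \<le> \<kappa> + m")
    case True
    then show ?thesis
      using a assms(1,4) by (simp add: of_nat_diff)
  next
    case False
    then show ?thesis
      using a assms(1,3,4) by simp
  qed
qed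

lemma card_Mx_mult_powr_le:
  fixes P :: "'a::{field,finite} poly \<Rightarrow> bool"
  shows "real (card {g \<in> Mx \<kappa>. P g}) * real CARD('a) powr x \<le> real CARD('a) powr (real \<kappa> + x)"
proof -
  have "card {g \<in> Mx \<kappa>. P g} \<le> CARD('a) ^ \<kappa>"
    using card_mono[OF finite_Mx, of "{g \<in> Mx \<kappa>. P g}" \<kappa>] card_Mx_le[of \<kappa>, where 'a = 'a] by auto
  then have "real (card {g \<in> Mx \<kappa>. P g}) \<le> real CARD('a) powr real \<kappa>"
    by (simp add: powr_realpow flip: of_nat_power)
  then show ?thesis
    by (simp add: powr_add mult_right_mono)
qed

lemma card_Delta_A_ge_mult_powr_le:
  fixes c :: "nat \<Rightarrow> 'a::{field,finite}" and C :: real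
  assumes "c m \<noteq> 0" and "(2::'a) \<noteq> 0" and "t \<ge> 1" and "C \<ge> 0"
    and "real N \<le> 4/3 * real \<kappa> + C" and "\<delta> \<le> N + 1" and "3 * real N / 4 < real \<delta>"
  defines "q \<equiv> real CARD('a)" and "Bt \<equiv> real (divisor_bound CARD('a) t (2 * (\<kappa> + m)))"
  shows "real (card {g \<in> Mx \<kappa>. \<delta> \<le> Delta_A c m g N}) * q powr (real \<delta> / 2)
    \<le> 2 * Bt * q powr (real m + 4 + C + (real \<kappa> + 3 * real N / 8))"
proof -
  define a where "a = (\<delta> - 1) div 2"
  have q1: "1 < q"
    using one_less_card_field by (simp add: q_def)
  have "2 * a < \<delta>"
    using assms(7) by (auto simp: a_def)
  then have "card {g \<in> Mx \<kappa>. \<delta> \<le> Delta_A c m g N}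
      \<le> 2 * CARD('a) ^ (N - 2 * a + 1) * CARD('a) ^ (\<kappa> + m - a) * divisor_bound CARD('a) t (2 * (\<kappa> + m))"
    by (rule card_Delta_A_ge_le[of c m, OF assms(1,2) _ assms(3)])
  then have "real (card {g \<in> Mx \<kappa>. \<delta> \<le> Delta_A c m g N})
      \<le> real (2 * CARD('a) ^ (N - 2 * a + 1) * CARD('a) ^ (\<kappa> + m - a)
        * divisor_bound CARD('a) t (2 * (\<kappa> + m)))"
    by (simp only: of_nat_le_iff)
  also have "\<dots> = 2 * q ^ (N - 2 * a + 1) * q ^ (\<kappa> + m - a) * Bt"
    by (simp add: q_def Bt_def)
  also have "\<dots> = 2 * q powr real (N - 2 * a + 1) * q powr real (\<kappa> + m - a) * Bt"
    using q1 by (simp only: powr_realpow[OF order.strict_trans[OF zero_less_one q1]])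
  finally have "real (card {g \<in> Mx \<kappa>. \<delta> \<le> Delta_A c m g N}) * q powr (real \<delta> / 2)
      \<le> 2 * q powr real (N - 2 * a + 1) * q powr real (\<kappa> + m - a) * Bt * q powr (real \<delta> / 2)"
    by (rule mult_right_mono) simp
  also have "\<dots> = 2 * Bt * q powr (real (N - 2 * a + 1) + real (\<kappa> + m - a) + real \<delta> / 2)"
    by (simp only: powr_add mult_ac)
  also have "\<dots> \<le> 2 * Bt * q powr (real m + 4 + C + (real \<kappa> + 3 * real N / 8))"
    using exponent_bound[of N \<delta> \<kappa> C m] assms(4-7) q1
    by (intro mult_left_mono powr_mono) (auto simp: a_def Bt_def)
  finally show ?thesis .
qed

lemma card_Delta_A_eq_le:
  fixes c :: "nat \<Rightarrow> 'a::{field,finite}" and C :: real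
  assumes "c m \<noteq> 0" and "(2::'a) \<noteq> 0" and "t \<ge> 1" and "C \<ge> 0"
    and "real N \<le> 4/3 * real \<kappa> + C" and "\<delta> \<le> N + 1"
  defines "q \<equiv> real CARD('a)"
  shows "real (card {g \<in> Mx \<kappa>. Delta_A c m g N = \<delta>}) * q powr (real \<delta> / 2)
    \<le> 2 * q powr (real m + 4 + C) * real (divisor_bound CARD('a) t (2 * (\<kappa> + m)))
       * q powr (real \<kappa> + 3 * real N / 8)"
proof -
  define Bt where "Bt = real (divisor_bound CARD('a) t (2 * (\<kappa> + m)))"
  define E where "E = real \<kappa> + 3 * real N / 8"
  have q1: "1 < q"
    using one_less_card_field by (simp add: q_def)
  have "1 \<le> Bt"
    using one_le_divisor_bound[of "CARD('a)" t "2 * (\<kappa> + m)"] by (simp add: Bt_def)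
  moreover have "1 \<le> q powr (real m + 4 + C)"
    using q1 assms(4) by (intro ge_one_powr_ge_zero) auto
  ultimately have "1 \<le> q powr (real m + 4 + C) * Bt"
    using mult_mono[of 1 _ 1 Bt] by fastforce
  then have factor: "1 \<le> 2 * q powr (real m + 4 + C) * Bt"
    by (simp add: mult.assoc)
  have "real (card {g \<in> Mx \<kappa>. Delta_A c m g N = \<delta>}) * q powr (real \<delta> / 2)
      \<le> 2 * q powr (real m + 4 + C) * Bt * q powr E"
  proof (cases "real \<delta> \<le> 3 * real N / 4")
    case True
    have "real (card {g \<in> Mx \<kappa>. Delta_A c m g N = \<delta>}) * q powr (real \<delta> / 2)
        \<le> q powr (real \<kappa> + real \<delta> / 2)"
      unfolding q_def by (rule card_Mx_mult_powr_le)
    also have "\<dots> \<le> q powr E"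
      using True q1 by (simp add: E_def)
    also have "\<dots> \<le> 2 * q powr (real m + 4 + C) * Bt * q powr E"
      using mult_right_mono[OF factor, of "q powr E"] by simp
    finally show ?thesis .
  next
    case False
    have "card {g \<in> Mx \<kappa>. Delta_A c m g N = \<delta>} \<le> card {g \<in> Mx \<kappa>. \<delta> \<le> Delta_A c m g N}"
      by (intro card_mono) (auto intro: finite_subset[OF _ finite_Mx])
    then have "real (card {g \<in> Mx \<kappa>. Delta_A c m g N = \<delta>}) * q powr (real \<delta> / 2)
        \<le> real (card {g \<in> Mx \<kappa>. \<delta> \<le> Delta_A c m g N}) * q powr (real \<delta> / 2)"
      by (intro mult_right_mono) auto
    also have "\<dots> \<le> 2 * Bt * q powr (real m + 4 + C + E)"
      using False unfolding q_def Bt_def E_def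
      by (intro card_Delta_A_ge_mult_powr_le assms(1-6)) simp
    also have "\<dots> = 2 * q powr (real m + 4 + C) * Bt * q powr E"
      by (simp add: powr_add)
    finally show ?thesis .
  qed
  then show ?thesis
    by (simp add: Bt_def E_def)
qed

lemma sum_Delta_A_le:
  fixes c :: "nat \<Rightarrow> 'a::{field,finite}" and C :: real
  assumes "c m \<noteq> 0" and "(2::'a) \<noteq> 0" and "t \<ge> 1" and "C \<ge> 0"
    and "real N \<le> 4/3 * real \<kappa> + C"
  defines "q \<equiv> real CARD('a)"
  shows "(\<Sum>g\<in>Mx \<kappa>. q powr (real (Delta_A c m g N) / 2))
    \<le> real (N + 2) * (2 * q powr (real m + 4 + C) * real (divisor_bound CARD('a) t (2 * (\<kappa> + m)))
       * q powr (real \<kappa> + 3 * real N / 8))"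
proof -
  have "(\<lambda>g. Delta_A c m g N) ` Mx \<kappa> \<subseteq> {0..N + 1}"
    using Delta_A_le by auto
  then have "(\<Sum>g\<in>Mx \<kappa>. q powr (real (Delta_A c m g N) / 2))
      = (\<Sum>\<delta>\<in>{0..N + 1}. \<Sum>g\<in>{g \<in> Mx \<kappa>. Delta_A c m g N = \<delta>}. q powr (real (Delta_A c m g N) / 2))"
    by (intro sum.group[symmetric] finite_Mx) simp_all
  also have "\<dots> = (\<Sum>\<delta>\<in>{0..N + 1}. real (card {g \<in> Mx \<kappa>. Delta_A c m g N = \<delta>}) * q powr (real \<delta> / 2))"
    by simp
  also have "\<dots> \<le> (\<Sum>\<delta>\<in>{0..N + 1}. 2 * q powr (real m + 4 + C)
      * real (divisor_bound CARD('a) t (2 * (\<kappa> + m))) * q powr (real \<kappa> + 3 * real N / 8))"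
    unfolding q_def by (intro sum_mono card_Delta_A_eq_le assms(1-5)) simp
  finally show ?thesis
    by simp
qed

section \<open>Optimising the divisor bound\<close>

definition growth_bound :: "real \<Rightarrow> real \<Rightarrow> nat \<Rightarrow> nat \<Rightarrow> real" where
  "growth_bound b M t n = (real n + M + 2) * (2 * (real n + M) + 1) powr b * 2 powr (2 * (real n + M) / real t)"

lemma one_le_growth_bound:
  assumes "b \<ge> 0" and "M \<ge> 0"
  shows "1 \<le> growth_bound b M t n"
proof -
  have "1 \<le> (2 * (real n + M) + 1) powr b" "1 \<le> (2::real) powr (2 * (real n + M) / real t)"
    using assms by (auto intro!: ge_one_powr_ge_zero)
  moreover have "1 \<le> real n + M + 2"
    using assms(2) by simp
  ultimately have "1 * 1 \<le> (real n + M + 2) * (2 * (real n + M) + 1) powr b"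
    by (intro mult_mono) auto
  with \<open>1 \<le> (2::real) powr _\<close> have "1 * 1 \<le> (real n + M + 2) * (2 * (real n + M) + 1) powr b
      * 2 powr (2 * (real n + M) / real t)"
    by (intro mult_mono) auto
  then show ?thesis
    by (simp add: growth_bound_def)
qed

lemma sum_Delta_A_le_growth_bound:
  fixes c :: "nat \<Rightarrow> 'a::{field,finite}" and C :: real
  assumes "c m \<noteq> 0" and "(2::'a) \<noteq> 0" and "t \<ge> 1" and "C \<ge> 0"
    and "real \<kappa> \<le> real n + C" and "real N \<le> real n + C" and "real N \<le> 4/3 * real \<kappa> + C"
  defines "q \<equiv> real CARD('a)"
  shows "(\<Sum>g\<in>Mx \<kappa>. q powr (real (Delta_A c m g N) / 2))
    \<le> 2 * q powr (real m + 4 + C) * growth_bound (real (CARD('a) ^ t)) (C + real m) t n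
      * q powr (real \<kappa> + 3 * real N / 8)"
proof -
  define K1 where "K1 = 2 * q powr (real m + 4 + C)"
  define E where "E = q powr (real \<kappa> + 3 * real N / 8)"
  have "real (divisor_bound CARD('a) t (2 * (\<kappa> + m)))
      \<le> (2 * (real n + (C + m)) + 1) powr real (CARD('a) ^ t) * 2 powr (2 * (real n + (C + m)) / t)"
    using assms(5) by (intro divisor_bound_le_powr assms(3)) simp
  moreover have "real (N + 2) \<le> real n + (C + m) + 2"
    using assms(6) by simp
  ultimately have "real (N + 2) * real (divisor_bound CARD('a) t (2 * (\<kappa> + m)))
      \<le> (real n + (C + m) + 2) * ((2 * (real n + (C + m)) + 1) powr real (CARD('a) ^ t)
        * 2 powr (2 * (real n + (C + m)) / t))"
    by (intro mult_mono) auto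
  also have "\<dots> = growth_bound (real (CARD('a) ^ t)) (C + real m) t n"
    by (simp add: growth_bound_def mult.assoc)
  finally have "real (N + 2) * real (divisor_bound CARD('a) t (2 * (\<kappa> + m)))
      \<le> growth_bound (real (CARD('a) ^ t)) (C + real m) t n" .
  then have "(K1 * E) * (real (N + 2) * real (divisor_bound CARD('a) t (2 * (\<kappa> + m))))
      \<le> (K1 * E) * growth_bound (real (CARD('a) ^ t)) (C + real m) t n"
    by (rule mult_left_mono) (simp add: K1_def E_def)
  then have "real (N + 2) * (K1 * real (divisor_bound CARD('a) t (2 * (\<kappa> + m))) * E)
      \<le> K1 * growth_bound (real (CARD('a) ^ t)) (C + real m) t n * E"
    by (simp only: ac_simps)
  moreover have "(\<Sum>g\<in>Mx \<kappa>. q powr (real (Delta_A c m g N) / 2))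
      \<le> real (N + 2) * (K1 * real (divisor_bound CARD('a) t (2 * (\<kappa> + m))) * E)"
    using sum_Delta_A_le[of c m, OF assms(1-4,7)] by (simp only: q_def K1_def E_def)
  ultimately show ?thesis
    unfolding K1_def E_def by (rule order.trans[rotated])
qed

lemma Min_family_tendsto_zero:
  fixes x :: "nat \<Rightarrow> nat \<Rightarrow> real" and l :: "nat \<Rightarrow> real"
  assumes nonneg: "\<And>t n. 0 \<le> x t n" and lim: "\<And>t. t \<ge> 1 \<Longrightarrow> x t \<longlonglongrightarrow> l t"
    and "l \<longlonglongrightarrow> 0"
  shows "(\<lambda>n. Min ((\<lambda>t. x t n) ` {1..n})) \<longlonglongrightarrow> 0"
proof (rule LIMSEQ_I)
  fix r :: real
  assume "0 < r"
  then obtain T0 where "\<forall>t\<ge>T0. l t < r"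
    using order_tendstoD(2)[OF assms(3), of r] by (auto simp: eventually_sequentially)
  then have T: "max 1 T0 \<ge> 1" "l (max 1 T0) < r"
    by auto
  then obtain N0 where N0: "\<forall>n\<ge>N0. x (max 1 T0) n < r"
    using order_tendstoD(2)[OF lim[OF T(1)] T(2)] by (auto simp: eventually_sequentially)
  have "norm (Min ((\<lambda>t. x t n) ` {1..n}) - 0) < r" if "n \<ge> max (max 1 T0) N0" for n
  proof -
    have "Min ((\<lambda>t. x t n) ` {1..n}) \<le> x (max 1 T0) n"
      using that by (intro Min_le) auto
    moreover have "0 \<le> Min ((\<lambda>t. x t n) ` {1..n})"
      using that nonneg by (subst Min_ge_iff) auto
    moreover have "x (max 1 T0) n < r"
      using N0 that by simp
    ultimately show ?thesis
      by simp
  qed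
  then show "\<exists>no. \<forall>n\<ge>no. norm (Min ((\<lambda>t. x t n) ` {1..n}) - 0) < r"
    by blast
qed

lemma log_growth_bound_tendsto:
  fixes q b M :: real
  assumes "q > 1" and "t > 0" and "b > 0" and "M \<ge> 0"
  shows "(\<lambda>n. log q (growth_bound b M t n) / real n) \<longlonglongrightarrow> 2 * ln 2 / (real t * ln q)"
proof -
  have "(\<lambda>n. log q ((real n + M + 2) * (2 * (real n + M) + 1) powr b * 2 powr (2 * (real n + M) / real t))
      / real n) \<longlonglongrightarrow> ln 2 * (2 * inverse (real t)) * inverse (ln q)"
    using assms by real_asymp
  moreover have "ln 2 * (2 * inverse (real t)) * inverse (ln q) = 2 * ln 2 / (real t * ln q)"
    by (simp add: field_simps)
  ultimately show ?thesis
    by (simp add: growth_bound_def)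
qed

text \<open>The divisor bound is optimised over \<open>t\<close> separately for each \<open>n\<close>; for \<open>n = 0\<close>
  the exponent \<open>\<epsilon> n * n\<close> vanishes whatever the (empty) minimum is, and the constant absorbs
  the bound with \<open>t = 1\<close>.\<close>

lemma sum_Delta_A_le_Min:
  fixes c :: "nat \<Rightarrow> 'a::{field,finite}" and C :: real
  assumes "c m \<noteq> 0" and "(2::'a) \<noteq> 0" and "C \<ge> 0"
    and "real \<kappa> \<le> real n + C" and "real N \<le> real n + C" and "real N \<le> 4/3 * real \<kappa> + C"
  defines "q \<equiv> real CARD('a)"
    and "Y \<equiv> \<lambda>t. growth_bound (real (CARD('a) ^ t)) (C + real m) t"
  shows "(\<Sum>g\<in>Mx \<kappa>. q powr (real (Delta_A c m g N) / 2))
    \<le> 2 * q powr (real m + 4 + C) * Y 1 0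
      * q powr (real \<kappa> + 3 * real N / 8 + Min ((\<lambda>t. log q (Y t n) / real n) ` {1..n}) * real n)"
proof -
  define K1 where "K1 = 2 * q powr (real m + 4 + C)"
  define E where "E = real \<kappa> + 3 * real N / 8"
  have q1: "1 < q"
    using one_less_card_field by (simp add: q_def)
  have Y1: "1 \<le> Y t n'" for t n'
    using assms(3) by (simp add: Y_def one_le_growth_bound)
  have bound: "(\<Sum>g\<in>Mx \<kappa>. q powr (real (Delta_A c m g N) / 2)) \<le> K1 * Y t n * q powr E" if "t \<ge> 1" for t
    using sum_Delta_A_le_growth_bound[of c m, OF assms(1,2) that assms(3-6)] by (simp add: q_def Y_def K1_def E_def)
  show ?thesis
  proof (cases "n = 0")
    case True
    then show ?thesis
      using bound[of 1] by (simp add: K1_def E_def)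
  next
    case False
    define \<epsilon> where "\<epsilon> = Min ((\<lambda>t. log q (Y t n) / real n) ` {1..n})"
    obtain t where t: "t \<in> {1..n}" "\<epsilon> = log q (Y t n) / real n"
      using False Min_in[of "(\<lambda>t. log q (Y t n) / real n) ` {1..n}"] unfolding \<epsilon>_def by fastforce
    have "q powr (\<epsilon> * real n) = Y t n"
      using False q1 Y1[of t n] by (simp add: t(2))
    then have "K1 * Y t n * q powr E = K1 * q powr (E + \<epsilon> * real n)"
      by (simp add: powr_add)
    also have "\<dots> \<le> K1 * Y 1 0 * q powr (E + \<epsilon> * real n)"
      using mult_left_mono[OF Y1[of 1 0], of "K1 * q powr (E + \<epsilon> * real n)"]
      by (simp add: K1_def mult_ac)
    finally show ?thesis
      using bound[of t] t(1) by (simp add: K1_def E_def \<epsilon>_def)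
  qed
qed

theorem proposition6p3:
  fixes c :: "nat \<Rightarrow> 'a::{field,finite}" and m :: nat and C :: real
  assumes "odd CARD('a)" and "c m \<noteq> 0" and "C \<ge> 0"
  shows "\<exists>K>0. \<exists>\<epsilon> :: nat \<Rightarrow> real. \<epsilon> \<longlonglongrightarrow> 0 \<and>
    (\<forall>n \<kappa> N. real \<kappa> \<le> real n + C \<and> real N \<le> real n + C \<and> real N \<le> 4/3 * real \<kappa> + C \<longrightarrow>
       (\<Sum>g\<in>Mx \<kappa>. real CARD('a) powr (real (Delta_A c m g N) / 2))
         \<le> K * real CARD('a) powr (real \<kappa> + 3 * real N / 8 + \<epsilon> n * real n))"
proof -
  define q where "q = real CARD('a)"
  define Y where "Y t = growth_bound (real (CARD('a) ^ t)) (C + real m) t" for t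
  define \<epsilon> where "\<epsilon> n = Min ((\<lambda>t. log q (Y t n) / real n) ` {1..n})" for n
  have q1: "1 < q"
    using one_less_card_field by (simp add: q_def)
  have Y1: "1 \<le> Y t n" for t n
    using one_le_growth_bound[of "real (CARD('a) ^ t)" "C + real m"] assms(3) by (simp add: Y_def)
  have "\<epsilon> \<longlonglongrightarrow> 0"
    unfolding \<epsilon>_def
  proof (rule Min_family_tendsto_zero)
    show "0 \<le> log q (Y t n) / real n" for t n
      using q1 Y1[of t n] by simp
    show "(\<lambda>n. log q (Y t n) / real n) \<longlonglongrightarrow> 2 * ln 2 / (real t * ln q)" if "t \<ge> 1" for t
      unfolding Y_def using q1 that assms(3) by (intro log_growth_bound_tendsto) auto
    show "(\<lambda>t. 2 * ln 2 / (real t * ln q)) \<longlonglongrightarrow> 0"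
      using q1 by real_asymp
  qed
  moreover have "0 < 2 * q powr (real m + 4 + C) * Y 1 0"
    using q1 Y1[of 1 0] by simp
  ultimately show ?thesis
    using sum_Delta_A_le_Min[of c m, OF assms(2) two_neq_zero_if_odd_card[OF assms(1)] assms(3)]
    unfolding q_def Y_def \<epsilon>_def by blast
qed

end
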